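(* Let \(V(G)=O\uplus I\uplus P\) be the Gallai–Edmonds decomposition of a graph \(G\). Then: (1) If \(I\cup P\) is an independent set in \(G\), then \(P=\emptyset\). (2) Let \(v,w\in O\) be two distinct vertices which lie in the same connected component of the induced subgraph \(G[O]\), and let \(G'=G[V(G)\setminus\{v,w\}]\). Then \(MM(G')\leq MM(G)-1\).
   Context: All graphs are finite, undirected and simple; \(MM(G)\) is the size of a maximum matching of \(G\). For \(X\subseteq V(G)\), \(N(X)\) is the set of vertices not in \(X\) adjacent to some vertex of \(X\). The Gallai–Edmonds decomposition of \(G\) is the partition \(V(G)=O\uplus I\uplus P\) where \(O\) is the set of vertices \(v\) such that some maximum matching of \(G\) leaves \(v\) unsaturated (not an end-point of any matching edge), \(I=N(O)\), and \(P=V(G)\setminus(I\cup O)\). *)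

theory Defs
  imports Main
begin

definition graph :: "'a set \<Rightarrow> 'a set set \<Rightarrow> bool" where
  "graph V E \<longleftrightarrow> finite V \<and> (\<forall>e\<in>E. \<exists>u v. e = {u, v} \<and> u \<noteq> v \<and> u \<in> V \<and> v \<in> V)"

definition matching :: "'a set set \<Rightarrow> 'a set set \<Rightarrow> bool" where
  "matching E M \<longleftrightarrow> M \<subseteq> E \<and> (\<forall>e1\<in>M. \<forall>e2\<in>M. e1 \<noteq> e2 \<longrightarrow> e1 \<inter> e2 = {})"

definition MM :: "'a set set \<Rightarrow> nat" where
  "MM E = Max {card M | M. matching E M}"

definition max_matching :: "'a set set \<Rightarrow> 'a set set \<Rightarrow> bool" where
  "max_matching E M \<longleftrightarrow> matching E M \<and> card M = MM E"

definition induced_edges :: "'a set set \<Rightarrow> 'a set \<Rightarrow> 'a set set" where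
  "induced_edges E X = {e \<in> E. e \<subseteq> X}"

definition nbhd :: "'a set \<Rightarrow> 'a set set \<Rightarrow> 'a set \<Rightarrow> 'a set" where
  "nbhd V E X = {u \<in> V - X. \<exists>x\<in>X. {u, x} \<in> E}"

definition GE_O :: "'a set \<Rightarrow> 'a set set \<Rightarrow> 'a set" where
  "GE_O V E = {v \<in> V. \<exists>M. max_matching E M \<and> v \<notin> \<Union>M}"

definition GE_I :: "'a set \<Rightarrow> 'a set set \<Rightarrow> 'a set" where
  "GE_I V E = nbhd V E (GE_O V E)"

definition GE_P :: "'a set \<Rightarrow> 'a set set \<Rightarrow> 'a set" where
  "GE_P V E = V - (GE_I V E \<union> GE_O V E)"

definition independent :: "'a set set \<Rightarrow> 'a set \<Rightarrow> bool" where
  "independent E S \<longleftrightarrow> (\<forall>u\<in>S. \<forall>v\<in>S. {u, v} \<notin> E)"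

definition same_component :: "'a set set \<Rightarrow> 'a set \<Rightarrow> 'a \<Rightarrow> 'a \<Rightarrow> bool" where
  "same_component E X u v \<longleftrightarrow> u \<in> X \<and> v \<in> X \<and>
     (u, v) \<in> {(x, y). {x, y} \<in> induced_edges E X}\<^sup>*"

end

theory Submission
  imports Defs
begin

text \<open>
  (1) A vertex p of P is covered by every maximum matching; its partner cannot lie in O, since
  then p would belong to I = N(O). So the matching edge at p joins two vertices of I \<union> P.

  (2) Given a maximum matching M and t \<in> O, an exchange argument yields a maximum matching N
  missing t that covers every vertex covered by M except possibly t. As both matchings cover the
  same number of vertices, N misses all but at most one of the vertices missed by M. Walking
  along a path from v to w inside O, this shows that no maximum matching misses both v and w;
  hence every matching of G - {v, w} is strictly smaller than MM(G).
\<close>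

lemma graph_edgeD:
  "graph V E \<Longrightarrow> e \<in> E \<Longrightarrow> \<exists>u v. e = {u, v} \<and> u \<noteq> v \<and> u \<in> V \<and> v \<in> V"
  unfolding graph_def by blast

lemma graph_edges_subset_Pow: "graph V E \<Longrightarrow> E \<subseteq> Pow V"
  using graph_edgeD by blast

lemma graph_finite_edges: "graph V E \<Longrightarrow> finite E"
  using graph_edges_subset_Pow unfolding graph_def by (meson finite_Pow_iff finite_subset)

lemma graph_induced_edges: "graph V E \<Longrightarrow> graph V (induced_edges E X)"
  unfolding graph_def induced_edges_def by blast

lemma matching_finite: "graph V E \<Longrightarrow> matching E M \<Longrightarrow> finite M"
  unfolding matching_def by (meson graph_finite_edges finite_subset)

lemma matching_Union_subset: "graph V E \<Longrightarrow> matching E M \<Longrightarrow> \<Union>M \<subseteq> V"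
  unfolding matching_def using graph_edges_subset_Pow by (meson Pow_iff Sup_le_iff subset_iff)

lemma matching_induced_edges: "matching (induced_edges E X) M \<Longrightarrow> matching E M"
  unfolding matching_def induced_edges_def by auto

lemma matching_induced_edges_Union_subset: "matching (induced_edges E X) M \<Longrightarrow> \<Union>M \<subseteq> X"
  unfolding matching_def induced_edges_def by auto

lemma card_Union_matching:
  assumes g: "graph V E" and m: "matching E M"
  shows "card (\<Union>M) = 2 * card M"
proof -
  have card_edge: "card e = 2" if "e \<in> M" for e
    using that m graph_edgeD[OF g] unfolding matching_def by fastforce
  have "pairwise disjnt M"
    using m unfolding matching_def pairwise_def disjnt_def by blast
  then have "card (\<Union>M) = sum card M"
    using card_edge by (intro card_Union_disjoint) (simp_all add: card_ge_0_finite)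
  also have "\<dots> = 2 * card M"
    using card_edge by simp
  finally show ?thesis .
qed

lemma finite_matching_cards: "graph V E \<Longrightarrow> finite {card M | M. matching E M}"
  by (rule finite_subset[of _ "{..card E}"])
    (auto simp: matching_def intro: card_mono graph_finite_edges)

lemma card_le_MM: "graph V E \<Longrightarrow> matching E M \<Longrightarrow> card M \<le> MM E"
  unfolding MM_def using finite_matching_cards by (blast intro: Max_ge)

lemma ex_max_matching:
  assumes g: "graph V E" shows "\<exists>M. max_matching E M"
proof -
  have "matching E {}" unfolding matching_def by simp
  then have "MM E \<in> {card M | M. matching E M}"
    unfolding MM_def using finite_matching_cards[OF g] by (intro Max_in) auto
  then show ?thesis unfolding max_matching_def by auto
qed

lemma max_matching_meets_edge:
  assumes g: "graph V E" and M: "max_matching E M" and e: "e \<in> E"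
  shows "e \<inter> \<Union>M \<noteq> {}"
proof
  assume free: "e \<inter> \<Union>M = {}"
  have m: "matching E M" using M unfolding max_matching_def by blast
  have "e \<notin> M" using free graph_edgeD[OF g e] by blast
  moreover have "matching E (insert e M)" using m e free unfolding matching_def by blast
  ultimately have "card M + 1 \<le> MM E"
    using card_le_MM[OF g] matching_finite[OF g m] by fastforce
  then show False using M unfolding max_matching_def by simp
qed

lemma MM_induced_edges_less:
  assumes g: "graph V E" and uncovered: "\<And>M. max_matching E M \<Longrightarrow> \<not> \<Union>M \<subseteq> X"
  shows "MM (induced_edges E X) < MM E"
proof -
  obtain N where N: "max_matching (induced_edges E X) N"
    using ex_max_matching[OF graph_induced_edges[OF g]] by blast
  then have mN: "matching (induced_edges E X) N" unfolding max_matching_def by blast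
  then have "\<not> max_matching E N"
    using uncovered matching_induced_edges_Union_subset by blast
  then have "card N < MM E"
    using card_le_MM[OF g matching_induced_edges[OF mN]] matching_induced_edges[OF mN]
    unfolding max_matching_def by fastforce
  then show ?thesis using N unfolding max_matching_def by simp
qed

lemma matching_swap_edge:
  assumes m: "matching E N" and e: "{x, y} \<in> E" and x: "x \<notin> \<Union>N"
    and f: "f \<in> N" "y \<in> f"
  shows "matching E (insert {x, y} (N - {f}))"
proof -
  have sub: "N \<subseteq> E" and disj: "\<And>g h. g \<in> N \<Longrightarrow> h \<in> N \<Longrightarrow> g \<noteq> h \<Longrightarrow> g \<inter> h = {}"
    using m unfolding matching_def by auto
  have fresh: "{x, y} \<inter> g = {}" "g \<inter> {x, y} = {}" if "g \<in> N - {f}" for g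
    using disj[of g f] that f x by blast+
  show ?thesis unfolding matching_def
  proof (intro conjI ballI impI)
    show "insert {x, y} (N - {f}) \<subseteq> E" using sub e by blast
  next
    fix g h assume "g \<in> insert {x, y} (N - {f})" "h \<in> insert {x, y} (N - {f})" "g \<noteq> h"
    then show "g \<inter> h = {}" using fresh disj by (elim insertE) auto
  qed
qed

lemma card_Diff_eq_card_Diff:
  assumes "finite A" "finite B" "card A = card B"
  shows "card (A - B) = card (B - A)"
  using assms card_Diff_subset_Int[of A B] card_Diff_subset_Int[of B A] by (simp add: inf_commute)

lemma GE_P_matched_within_I_P:
  assumes g: "graph V E" and p: "p \<in> GE_P V E"
  shows "\<exists>i \<in> GE_I V E \<union> GE_P V E. {p, i} \<in> E"
proof -
  have pV: "p \<in> V" and pI: "p \<notin> GE_I V E" and pO: "p \<notin> GE_O V E"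
    using p unfolding GE_P_def by auto
  obtain M where M: "max_matching E M" using ex_max_matching[OF g] by blast
  then obtain e where e: "e \<in> M" "p \<in> e" using pO pV unfolding GE_O_def by blast
  have eE: "e \<in> E" using e M unfolding max_matching_def matching_def by blast
  obtain i where i: "e = {p, i}" "i \<in> V"
    using graph_edgeD[OF g eE] e(2) by (metis insert_commute singletonD insertE)
  have "i \<notin> GE_O V E"
  proof
    assume "i \<in> GE_O V E"
    then have "p \<in> GE_I V E" unfolding GE_I_def nbhd_def using pV pO eE i(1) by blast
    then show False using pI by contradiction
  qed
  then show ?thesis using i eE unfolding GE_P_def by blast
qed

text \<open>
  Among the maximum matchings missing t, one with the largest overlap with M works: a vertex
  x \<noteq> t covered by M but not by N could be swapped into N along its M-edge.
\<close>
lemma GE_O_exchange: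
  assumes g: "graph V E" and M: "max_matching E M" and t: "t \<in> GE_O V E"
  shows "\<exists>N. max_matching E N \<and> t \<notin> \<Union>N \<and> \<Union>M - \<Union>N \<subseteq> {t}"
proof -
  define missing_t where "missing_t = (\<lambda>N. max_matching E N \<and> t \<notin> \<Union>N)"
  have mM: "matching E M" using M unfolding max_matching_def by blast
  obtain N0 where "missing_t N0" using t unfolding GE_O_def missing_t_def by blast
  then have "\<exists>N. missing_t N \<and> (\<forall>N'. missing_t N' \<longrightarrow> card (M \<inter> N') \<le> card (M \<inter> N))"
  proof (rule ex_has_greatest_nat[where b = "card M + 1"])
    show "\<forall>N. missing_t N \<longrightarrow> card (M \<inter> N) < card M + 1"
      using matching_finite[OF g mM] by (simp add: card_mono le_imp_less_Suc)
  qed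
  then obtain N where N: "max_matching E N" "t \<notin> \<Union>N"
    and best: "\<And>N'. missing_t N' \<Longrightarrow> card (M \<inter> N') \<le> card (M \<inter> N)"
    unfolding missing_t_def by blast
  have mN: "matching E N" using N unfolding max_matching_def by blast
  have "x \<notin> \<Union>M" if x: "x \<notin> \<Union>N" "x \<noteq> t" for x
  proof
    assume "x \<in> \<Union>M"
    then obtain e where e: "e \<in> M" "x \<in> e" by blast
    have eE: "e \<in> E" using e mM unfolding matching_def by blast
    then obtain y where exy: "e = {x, y}" using graph_edgeD[OF g eE] e(2) by blast
    have "y \<in> \<Union>N" using max_matching_meets_edge[OF g N(1) eE] exy x by blast
    then obtain f where f: "f \<in> N" "y \<in> f" by blast
    define N' where "N' = insert e (N - {f})"
    have eN: "e \<notin> N" using e x by blast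
    have fM: "f \<notin> M"
    proof
      assume "f \<in> M"
      moreover have "f \<inter> e \<noteq> {}" using f(2) exy by blast
      ultimately show False using mM e(1) f(1) eN unfolding matching_def by metis
    qed
    have "matching E N'" unfolding N'_def exy using matching_swap_edge[OF mN eE[unfolded exy] x(1) f] .
    moreover have "card N' = card N"
    proof -
      have "finite N" using matching_finite[OF g mN] .
      then have "card N' = Suc (card (N - {f}))"
        unfolding N'_def using eN by (intro card_insert_disjoint) auto
      also have "\<dots> = card N" using card_Suc_Diff1[OF \<open>finite N\<close> f(1)] .
      finally show ?thesis .
    qed
    moreover have "t \<notin> \<Union>N'" unfolding N'_def using N(2) exy x(2) \<open>y \<in> \<Union>N\<close> by blast
    ultimately have "missing_t N'" using N(1) unfolding missing_t_def max_matching_def by simp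
    moreover have "M \<inter> N' = insert e (M \<inter> N)" unfolding N'_def using fM e by blast
    then have "card (M \<inter> N') = card (M \<inter> N) + 1"
      using eN matching_finite[OF g mM] by simp
    ultimately show False using best by fastforce
  qed
  then show ?thesis using N by blast
qed

lemma GE_O_exchange_keeps_missed:
  assumes g: "graph V E" and M: "max_matching E M" and t: "t \<in> GE_O V E"
    and uv: "u \<noteq> v" "u \<notin> \<Union>M" "v \<notin> \<Union>M"
  shows "\<exists>N. max_matching E N \<and> t \<notin> \<Union>N \<and> (u \<notin> \<Union>N \<or> v \<notin> \<Union>N)"
proof -
  obtain N where N: "max_matching E N" "t \<notin> \<Union>N" and sub: "\<Union>M - \<Union>N \<subseteq> {t}"
    using GE_O_exchange[OF assms(1-3)] by blast
  have mM: "matching E M" and mN: "matching E N"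
    using M N unfolding max_matching_def by auto
  have "finite V" using g unfolding graph_def by simp
  then have fin: "finite (\<Union>M)" "finite (\<Union>N)"
    using matching_Union_subset[OF g] mM mN by (blast intro: finite_subset)+
  have "card (\<Union>M) = card (\<Union>N)"
    using M N card_Union_matching[OF g mM] card_Union_matching[OF g mN]
    unfolding max_matching_def by simp
  then have "card (\<Union>N - \<Union>M) \<le> 1"
    using card_Diff_eq_card_Diff[OF fin] card_mono[OF _ sub] by simp
  moreover have "u \<in> \<Union>N \<and> v \<in> \<Union>N \<Longrightarrow> card {u, v} \<le> card (\<Union>N - \<Union>M)"
    using uv fin(2) by (intro card_mono) auto
  ultimately show ?thesis using N uv(1) by auto
qed

lemma max_matching_covers_connected_pair:
  assumes g: "graph V E" and path: "same_component E (GE_O V E) u v"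
    and M: "max_matching E M" and "u \<noteq> v"
  shows "u \<in> \<Union>M \<or> v \<in> \<Union>M"
proof -
  have "(u, v) \<in> {(x, y). {x, y} \<in> induced_edges E (GE_O V E)}\<^sup>*"
    using path unfolding same_component_def by blast
  then have "max_matching E M \<Longrightarrow> u \<noteq> v \<Longrightarrow> u \<notin> \<Union>M \<Longrightarrow> v \<notin> \<Union>M \<Longrightarrow> False"
  proof (induction arbitrary: M rule: rtrancl_induct)
    case (step t v)
    then have tv: "{t, v} \<in> E" "t \<in> GE_O V E" unfolding induced_edges_def by auto
    show False
    proof (cases "t = u")
      case True
      then show ?thesis using max_matching_meets_edge[OF g step.prems(1) tv(1)] step.prems by blast
    next
      case False
      obtain N where N: "max_matching E N" "t \<notin> \<Union>N" "u \<notin> \<Union>N \<or> v \<notin> \<Union>N"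
        using GE_O_exchange_keeps_missed[OF g step.prems(1) tv(2) step.prems(2-4)] by blast
      show ?thesis
        using N step.IH[OF N(1)] False max_matching_meets_edge[OF g N(1) tv(1)] by blast
    qed
  qed simp
  then show ?thesis using assms(3,4) by blast
qed

theorem corollary2:
  fixes V :: "'a set" and E :: "'a set set"
  assumes "graph V E"
  shows "(independent E (GE_I V E \<union> GE_P V E) \<longrightarrow> GE_P V E = {})
     \<and> (\<forall>v w. v \<in> GE_O V E \<and> w \<in> GE_O V E \<and> v \<noteq> w \<and> same_component E (GE_O V E) v w
          \<longrightarrow> MM (induced_edges E (V - {v, w})) \<le> MM E - 1)"
proof (intro conjI impI allI)
  assume "independent E (GE_I V E \<union> GE_P V E)"
  then show "GE_P V E = {}"
    using GE_P_matched_within_I_P[OF assms] unfolding independent_def by blast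
next
  fix v w
  assume vw: "v \<in> GE_O V E \<and> w \<in> GE_O V E \<and> v \<noteq> w \<and> same_component E (GE_O V E) v w"
  have "MM (induced_edges E (V - {v, w})) < MM E"
  proof (rule MM_induced_edges_less[OF assms])
    fix M assume "max_matching E M"
    then show "\<not> \<Union>M \<subseteq> V - {v, w}"
      using max_matching_covers_connected_pair[OF assms] vw by blast
  qed
  then show "MM (induced_edges E (V - {v, w})) \<le> MM E - 1" by simp
qed

end
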